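(* Let $A\succeq0$ be an $m\times m$ diagonal matrix and $M\succ0$ an $m\times m$ matrix, and let $M_{diag}$ denote the diagonal matrix with the same diagonal as $M$. Then $[(M_{diag})^{-1}+A]^{-1}\succeq\big([M^{-1}+A]^{-1}\big)_{diag}$.
   Context: For a square matrix $E$, $(E)_{diag}$ is the diagonal matrix whose diagonal entries equal those of $E$. $P\succeq Q$ means $P-Q$ is positive semidefinite; $M\succ0$ means positive definite. *)

theory Defs
  imports "HOL-Analysis.Analysis"
begin

definition psd_mat :: "real^'n^'n \<Rightarrow> bool" where
  "psd_mat P \<longleftrightarrow> transpose P = P \<and> (\<forall>x. 0 \<le> x \<bullet> (P *v x))"

definition pd_mat :: "real^'n^'n \<Rightarrow> bool" where
  "pd_mat P \<longleftrightarrow> transpose P = P \<and> (\<forall>x. x \<noteq> 0 \<longrightarrow> 0 < x \<bullet> (P *v x))"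

definition loewner_ge :: "real^'n^'n \<Rightarrow> real^'n^'n \<Rightarrow> bool" where
  "loewner_ge P Q \<longleftrightarrow> psd_mat (P - Q)"

definition diag_part :: "real^'n^'n \<Rightarrow> real^'n^'n" where
  "diag_part E = (\<chi> i j. if i = j then E $ i $ i else 0)"

definition is_diag_mat :: "real^'n^'n \<Rightarrow> bool" where
  "is_diag_mat A \<longleftrightarrow> (\<forall>i j. i \<noteq> j \<longrightarrow> A $ i $ j = 0)"

end

theory Submission
  imports Defs
begin

text \<open>Both sides are diagonal, so the claim is an entrywise inequality
  \<open>N\<^sub>i\<^sub>i \<le> 1 / (1/M\<^sub>i\<^sub>i + A\<^sub>i\<^sub>i)\<close> for \<open>N = (M\<^sup>-\<^sup>1 + A)\<^sup>-\<^sup>1\<close>.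
  With \<open>y = N e\<^sub>i\<close> we have \<open>N\<^sub>i\<^sub>i = y\<^sup>T (M\<^sup>-\<^sup>1 + A) y = y\<^sup>T M\<^sup>-\<^sup>1 y + y\<^sup>T A y\<close>.
  The Cauchy-Schwarz inequality for the inner product given by \<open>M\<close> yields
  \<open>y\<^sup>T M\<^sup>-\<^sup>1 y \<ge> N\<^sub>i\<^sub>i\<^sup>2 / M\<^sub>i\<^sub>i\<close>, and diagonality of \<open>A \<succeq> 0\<close> yields
  \<open>y\<^sup>T A y \<ge> A\<^sub>i\<^sub>i N\<^sub>i\<^sub>i\<^sup>2\<close>; dividing by \<open>N\<^sub>i\<^sub>i > 0\<close> gives the bound.\<close>

lemma inner_matrix_vector_commute:
  fixes M :: "real^'n^'n"
  assumes "transpose M = M"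
  shows "x \<bullet> (M *v y) = y \<bullet> (M *v x)"
proof -
  have "x \<bullet> (M *v y) = (transpose M *v x) \<bullet> y" by (simp add: dot_lmul_matrix)
  then show ?thesis using assms by (simp add: inner_commute)
qed

lemma axis_inner_matrix_axis: "axis i 1 \<bullet> ((M::real^'n^'n) *v axis i 1) = M $ i $ i"
  by (simp add: inner_axis' matrix_vector_mult_basis column_def)

lemma matrix_inv_right:
  fixes A :: "real^'n^'n"
  assumes "invertible A"
  shows "A ** matrix_inv A = mat 1"
  using someI_ex[OF assms[unfolded invertible_def]] by (auto simp: matrix_inv_def)

lemma matrix_inv_unique:
  fixes A B :: "real^'n^'n"
  assumes "A ** B = mat 1" "B ** A = mat 1"
  shows "matrix_inv A = B"
proof -
  have inv: "invertible A" using assms invertible_def by blast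
  have "matrix_inv A = (B ** A) ** matrix_inv A" using assms by simp
  also have "\<dots> = B" using matrix_inv_right[OF inv] by (metis matrix_mul_assoc matrix_mul_rid)
  finally show ?thesis .
qed

lemma matrix_vector_matrix_inv_cancel:
  fixes A :: "real^'n^'n"
  assumes "invertible A"
  shows "A *v (matrix_inv A *v x) = x"
  by (simp add: matrix_vector_mul_assoc matrix_inv_right[OF assms])

lemma invertible_if_quadratic_form_pos:
  fixes P :: "real^'n^'n"
  assumes "\<And>x. x \<noteq> 0 \<Longrightarrow> 0 < x \<bullet> (P *v x)"
  shows "invertible P"
proof -
  have "P *v x = 0 \<Longrightarrow> x = 0" for x
    using assms[of x] by fastforce
  then show ?thesis by (metis invertible_left_inverse matrix_left_invertible_ker)
qed

lemma pd_mat_invertible: "pd_mat M \<Longrightarrow> invertible M"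
  by (rule invertible_if_quadratic_form_pos) (simp add: pd_mat_def)

lemma pd_mat_nonneg: "pd_mat M \<Longrightarrow> 0 \<le> x \<bullet> (M *v x)"
  unfolding pd_mat_def by (cases "x = 0") (auto intro: less_imp_le)

lemma pd_mat_diag_pos: "pd_mat M \<Longrightarrow> 0 < M $ i $ i"
  unfolding pd_mat_def by (metis axis_inner_matrix_axis axis_eq_0_iff zero_neq_one)

lemma psd_mat_diag_nonneg: "psd_mat A \<Longrightarrow> 0 \<le> A $ i $ i"
  unfolding psd_mat_def by (metis axis_inner_matrix_axis)

lemma pd_mat_cauchy_schwarz:
  fixes M :: "real^'n^'n"
  assumes "pd_mat M"
  shows "(x \<bullet> (M *v y))\<^sup>2 \<le> (x \<bullet> (M *v x)) * (y \<bullet> (M *v y))"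
proof (cases "x = 0")
  case False
  define m b where "m = x \<bullet> (M *v x)" and "b = x \<bullet> (M *v y)"
  have m: "0 < m" using assms False by (simp add: pd_mat_def m_def)
  have swap: "y \<bullet> (M *v x) = b"
    using assms inner_matrix_vector_commute by (auto simp: pd_mat_def b_def)
  \<comment> \<open>nonnegativity of the form at the minimiser \<open>y - (b/m) x\<close>\<close>
  have "0 \<le> (y - (b/m) *\<^sub>R x) \<bullet> (M *v (y - (b/m) *\<^sub>R x))"
    using pd_mat_nonneg[OF assms] .
  also have "\<dots> = y \<bullet> (M *v y) - b\<^sup>2 / m"
    using m swap by (simp add: matrix_vector_mult_diff_distrib matrix_vector_mult_scaleR
        inner_diff_left inner_diff_right m_def[symmetric] b_def[symmetric]
        power2_eq_square field_simps)
  finally show ?thesis using m by (simp add: m_def[symmetric] b_def[symmetric] field_simps)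
qed simp

lemma pd_mat_matrix_inv_form:
  fixes M :: "real^'n^'n"
  assumes "pd_mat M"
  shows inner_square_le_pd_mat_matrix_inv_form:
      "(x \<bullet> y)\<^sup>2 \<le> (x \<bullet> (M *v x)) * (y \<bullet> (matrix_inv M *v y))"
    and pd_mat_matrix_inv_form_pos: "y \<noteq> 0 \<Longrightarrow> 0 < y \<bullet> (matrix_inv M *v y)"
proof -
  define w where "w = matrix_inv M *v y"
  have y: "y = M *v w"
    by (simp add: w_def matrix_vector_matrix_inv_cancel pd_mat_invertible[OF assms])
  have form: "y \<bullet> (matrix_inv M *v y) = w \<bullet> (M *v w)"
    unfolding w_def[symmetric] by (subst (1) y) (simp add: inner_commute)
  show "(x \<bullet> y)\<^sup>2 \<le> (x \<bullet> (M *v x)) * (y \<bullet> (matrix_inv M *v y))"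
    unfolding form by (subst y) (rule pd_mat_cauchy_schwarz[OF assms])
  show "0 < y \<bullet> (matrix_inv M *v y)" if "y \<noteq> 0"
  proof -
    have "w \<noteq> 0" using that y by auto
    then show ?thesis using assms unfolding form pd_mat_def by blast
  qed
qed

definition diag_mat :: "('n \<Rightarrow> real) \<Rightarrow> real^'n^'n" where
  "diag_mat f = (\<chi> i j. if i = j then f i else 0)"

lemma diag_mat_mult: "diag_mat f ** diag_mat g = diag_mat (\<lambda>i. f i * g i)"
  by (auto simp: diag_mat_def matrix_matrix_mult_def vec_eq_iff if_distrib[of "\<lambda>x. x * _"]
      cong: if_cong)

lemma diag_mat_one: "diag_mat (\<lambda>i. 1) = mat 1"
  by (simp add: diag_mat_def mat_def vec_eq_iff)

lemma matrix_inv_diag_mat: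
  assumes "\<And>i. f i \<noteq> 0"
  shows "matrix_inv (diag_mat f) = diag_mat (\<lambda>i. inverse (f i))"
  by (rule matrix_inv_unique) (simp_all add: diag_mat_mult assms diag_mat_one[symmetric])

lemma diag_mat_add: "diag_mat f + diag_mat g = diag_mat (\<lambda>i. f i + g i)"
  by (simp add: diag_mat_def vec_eq_iff)

lemma diag_mat_diff: "diag_mat f - diag_mat g = diag_mat (\<lambda>i. f i - g i)"
  by (simp add: diag_mat_def vec_eq_iff)

lemma diag_part_eq_diag_mat: "diag_part M = diag_mat (\<lambda>i. M $ i $ i)"
  by (simp add: diag_part_def diag_mat_def)

lemma is_diag_mat_eq_diag_mat: "is_diag_mat A \<Longrightarrow> A = diag_mat (\<lambda>i. A $ i $ i)"
  by (auto simp: is_diag_mat_def diag_mat_def vec_eq_iff)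

lemma inner_diag_mat: "x \<bullet> (diag_mat f *v x) = (\<Sum>i\<in>UNIV. f i * (x $ i)\<^sup>2)"
  by (simp add: diag_mat_def matrix_vector_mult_def inner_vec_def power2_eq_square
      if_distrib[of "\<lambda>x. x * _"] if_distrib[of "\<lambda>x. _ * x"] mult_ac cong: if_cong)

lemma psd_mat_diag_mat: "(\<And>i. 0 \<le> f i) \<Longrightarrow> psd_mat (diag_mat f)"
  unfolding psd_mat_def inner_diag_mat
  by (simp add: diag_mat_def transpose_def vec_eq_iff sum_nonneg)

lemma diag_psd_mat_form_ge:
  fixes A :: "real^'n^'n"
  assumes "is_diag_mat A" "psd_mat A"
  shows "A $ i $ i * (y $ i)\<^sup>2 \<le> y \<bullet> (A *v y)"
proof -
  have "A $ i $ i * (y $ i)\<^sup>2 \<le> (\<Sum>j\<in>UNIV. A $ j $ j * (y $ j)\<^sup>2)"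
    by (rule member_le_sum) (auto simp: psd_mat_diag_nonneg[OF assms(2)])
  also have "\<dots> = y \<bullet> (A *v y)"
    by (subst (2) is_diag_mat_eq_diag_mat[OF assms(1)]) (simp add: inner_diag_mat)
  finally show ?thesis .
qed

lemma invertible_matrix_inv_add_psd:
  fixes M A :: "real^'n^'n"
  assumes "pd_mat M" "psd_mat A"
  shows "invertible (matrix_inv M + A)"
proof (rule invertible_if_quadratic_form_pos)
  fix x :: "real^'n" assume "x \<noteq> 0"
  then show "0 < x \<bullet> ((matrix_inv M + A) *v x)"
    using pd_mat_matrix_inv_form_pos[OF assms(1)] assms(2)
    by (force simp: psd_mat_def matrix_vector_mult_add_rdistrib inner_add_right
        intro: add_pos_nonneg)
qed

lemma diag_matrix_inv_add_le:
  fixes M A :: "real^'n^'n"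
  assumes A: "is_diag_mat A" "psd_mat A" and M: "pd_mat M"
  shows "matrix_inv (matrix_inv M + A) $ i $ i \<le> inverse (inverse (M $ i $ i) + A $ i $ i)"
proof -
  define P where "P = matrix_inv M + A"
  define y where "y = matrix_inv P *v axis i 1"
  define b m a where "b = y $ i" and "m = M $ i $ i" and "a = A $ i $ i"
  define q r where "q = y \<bullet> (matrix_inv M *v y)" and "r = y \<bullet> (A *v y)"
  have Py: "P *v y = axis i 1"
    using invertible_matrix_inv_add_psd[OF M A(2)]
    by (simp add: y_def P_def matrix_vector_matrix_inv_cancel)
  have b_entry: "b = matrix_inv P $ i $ i"
    by (simp add: b_def y_def matrix_vector_mult_basis column_def)
  have b_form: "b = q + r"
  proof -
    have "b = y \<bullet> (P *v y)" by (simp add: Py b_def inner_axis)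
    then show ?thesis
      by (simp add: P_def q_def r_def matrix_vector_mult_add_rdistrib inner_add_right)
  qed
  have m: "0 < m" and a: "0 \<le> a"
    using pd_mat_diag_pos[OF M] psd_mat_diag_nonneg[OF A(2)] by (auto simp: m_def a_def)
  have "y \<noteq> 0" using Py by auto
  then have "0 < q" using pd_mat_matrix_inv_form_pos[OF M] by (simp add: q_def)
  moreover have "0 \<le> r" using A(2) by (simp add: psd_mat_def r_def)
  ultimately have b: "0 < b" using b_form by simp
  have "b\<^sup>2 \<le> m * q"
    using inner_square_le_pd_mat_matrix_inv_form[OF M, of "axis i 1" y]
    by (simp add: inner_axis' matrix_vector_mult_basis column_def b_def m_def q_def)
  then have "b\<^sup>2 / m \<le> q" using m by (simp add: divide_le_eq mult.commute)
  moreover have "a * b\<^sup>2 \<le> r"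
    using diag_psd_mat_form_ge[OF A] by (simp add: a_def b_def r_def)
  moreover have "b * (b * (inverse m + a)) = b\<^sup>2 / m + a * b\<^sup>2"
    by (simp add: field_simps power2_eq_square)
  ultimately have "b * (b * (inverse m + a)) \<le> b * 1" using b_form by linarith
  then have "b * (inverse m + a) \<le> 1" using b by (simp only: mult_le_cancel_left_pos)
  moreover have "0 < inverse m + a" using m a by (simp add: add_pos_nonneg)
  ultimately have "b \<le> inverse (inverse m + a)"
    by (simp add: inverse_eq_divide pos_le_divide_eq)
  then show ?thesis by (simp add: b_entry P_def m_def a_def)
qed

theorem lemma3:
  fixes A M :: "real^'m^'m"
  assumes "is_diag_mat A" and "psd_mat A"
    and "pd_mat M"
  shows "loewner_ge (matrix_inv (matrix_inv (diag_part M) + A))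
                    (diag_part (matrix_inv (matrix_inv M + A)))"
proof -
  have M_diag: "0 < M $ i $ i" and A_diag: "0 \<le> A $ i $ i" for i
    using pd_mat_diag_pos[OF assms(3)] psd_mat_diag_nonneg[OF assms(2)] by auto
  have "matrix_inv (diag_part M) = diag_mat (\<lambda>i. inverse (M $ i $ i))"
    unfolding diag_part_eq_diag_mat by (rule matrix_inv_diag_mat) (metis M_diag less_irrefl)
  then have lhs: "matrix_inv (diag_part M) + A = diag_mat (\<lambda>i. inverse (M $ i $ i) + A $ i $ i)"
    by (subst is_diag_mat_eq_diag_mat[OF assms(1)]) (simp add: diag_mat_add)
  have "0 < inverse (M $ i $ i) + A $ i $ i" for i
    using M_diag[of i] A_diag[of i] by (simp add: add_pos_nonneg)
  then have inv_lhs: "matrix_inv (matrix_inv (diag_part M) + A)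
      = diag_mat (\<lambda>i. inverse (inverse (M $ i $ i) + A $ i $ i))"
    unfolding lhs by (intro matrix_inv_diag_mat) (metis less_irrefl)
  show ?thesis
    unfolding loewner_ge_def inv_lhs unfolding diag_part_eq_diag_mat diag_mat_diff
    by (rule psd_mat_diag_mat) (simp add: diag_matrix_inv_add_le[OF assms])
qed

end
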